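(* Let $n\ge 1$ and let $\beta=\prod_{r=1}^k\sigma_{i_r}^{\varepsilon_r}$ be an $n$-string braid, given as a word in the Artin generators $\sigma_1,\dots,\sigma_{n-1}$ with $\varepsilon_r=\pm1$, whose closure $\hat\beta$ is a single closed curve (a knot). Let $B(t)=\prod_{r=1}^k B_{i_r}^{\varepsilon_r}\in GL(n,\mathbf Z[t^{\pm1}])$ be its (unreduced) Burau matrix, where $B_i$ is the $n\times n$ matrix which agrees with the identity except in rows and columns $i,i+1$, where it has the block $\begin{pmatrix}1-t&t\\1&0\end{pmatrix}$. Substitute $t=e^h$ and expand $\det(I-xB(e^h))$ as a power series in $h$ whose coefficients are polynomials in $x$: $$\det(I-xB(e^h))=a_0(x)+a_1(x)h+O(h^2),$$ and write $a_1(x)=f_1x+f_2x^2+\cdots+f_nx^n$ with $f_1,\dots,f_n\in\mathbf Z$. Then Fiedler's polynomial $F_\beta$ of $\beta$ satisfies $$F_\beta(x^{1/2})=(f_1x+\cdots+f_{n-1}x^{n-1})\,x^{-n/2}.$$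
   Context: Conventions: the braid word is read from top to bottom and the strings are oriented downwards; the $r$th letter $\sigma_{i_r}^{\varepsilon_r}$ is a crossing between the strings in positions $i_r$ and $i_r+1$, positive if $\varepsilon_r=+1$ and negative if $\varepsilon_r=-1$. The closed braid $\hat\beta$ is regarded as a curve winding around the braid axis. For the $r$th crossing, the "ascending string" is the string starting from the end of the overcrossing strand, namely string $i_r$ if $\varepsilon_r=+1$ and string $i_r+1$ if $\varepsilon_r=-1$. Define the positive integer $m(r)$ by smoothing the $r$th crossing (in the orientation-respecting way) and following the ascending string around the closed braid until it closes up; $m(r)$ is the number of turns it makes around the braid axis before closing. Fiedler's polynomial is the Laurent polynomial $F_\beta(X)=\sum_{r=1}^k\varepsilon_r X^{2m(r)-n}$, so that $F_\beta(x^{1/2})=\sum_{r=1}^k\varepsilon_r x^{m(r)-n/2}$. *)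

theory Defs
  imports Complex_Main "Jordan_Normal_Form.Determinant"
begin

text \<open>A braid letter is a pair (i, e) standing for sigma_i^e, with positions 1-based,
  1 <= i <= n-1 and e = 1 or e = -1.  A braid word is a list of letters, read left to
  right = top to bottom.\<close>

type_synonym letter = "nat \<times> int"

definition braid_word :: "nat \<Rightarrow> letter list \<Rightarrow> bool" where
  "braid_word n w \<longleftrightarrow> (\<forall>(i, e) \<in> set w. 1 \<le> i \<and> i < n \<and> (e = 1 \<or> e = -1))"

definition swap_pos :: "nat \<Rightarrow> nat \<Rightarrow> nat" where
  "swap_pos i p = (if p = i then i + 1 else if p = i + 1 then i else p)"

definition follow :: "letter list \<Rightarrow> nat \<Rightarrow> nat" where
  "follow ws p = foldl (\<lambda>q l. swap_pos (fst l) q) p ws"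

definition is_knot_closure :: "nat \<Rightarrow> letter list \<Rightarrow> bool" where
  "is_knot_closure n w \<longleftrightarrow> (\<forall>p\<in>{1..n}. \<forall>q\<in>{1..n}. \<exists>m. (follow w ^^ m) p = q)"

text \<open>One full turn around the braid axis after smoothing the r-th crossing (0-based r):
  starting just below crossing r at position p, go through the crossings after r,
  around the closure, through the crossings before r and through the smoothed crossing r
  (which does not change positions).\<close>
definition smoothed_turn :: "letter list \<Rightarrow> nat \<Rightarrow> nat \<Rightarrow> nat" where
  "smoothed_turn w r p = follow (take r w) (follow (drop (Suc r) w) p)"

definition ascending_pos :: "letter list \<Rightarrow> nat \<Rightarrow> nat" where
  "ascending_pos w r = (if snd (w ! r) = 1 then fst (w ! r) else fst (w ! r) + 1)"

definition m_turns :: "letter list \<Rightarrow> nat \<Rightarrow> nat" where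
  "m_turns w r = (LEAST m. 0 < m \<and>
      (smoothed_turn w r ^^ m) (ascending_pos w r) = ascending_pos w r)"

definition fiedler :: "nat \<Rightarrow> letter list \<Rightarrow> real \<Rightarrow> real" where
  "fiedler n w X = (\<Sum>r<length w. of_int (snd (w ! r)) * X powi (2 * int (m_turns w r) - int n))"

text \<open>Burau generator B_i (matrix indices are 0-based, so positions i, i+1 are
  indices i-1, i) and its inverse.\<close>
definition burau_gen :: "nat \<Rightarrow> nat \<Rightarrow> real \<Rightarrow> real mat" where
  "burau_gen n i t = mat n n (\<lambda>(a, b).
     if a = i - 1 \<and> b = i - 1 then 1 - t
     else if a = i - 1 \<and> b = i then t
     else if a = i \<and> b = i - 1 then 1
     else if a = i \<and> b = i then 0
     else if a = b then 1 else 0)"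

definition burau_gen_inv :: "nat \<Rightarrow> nat \<Rightarrow> real \<Rightarrow> real mat" where
  "burau_gen_inv n i t = mat n n (\<lambda>(a, b).
     if a = i - 1 \<and> b = i - 1 then 0
     else if a = i - 1 \<and> b = i then 1
     else if a = i \<and> b = i - 1 then 1 / t
     else if a = i \<and> b = i then 1 - 1 / t
     else if a = b then 1 else 0)"

definition burau_letter :: "nat \<Rightarrow> letter \<Rightarrow> real \<Rightarrow> real mat" where
  "burau_letter n l t = (if snd l = 1 then burau_gen n (fst l) t else burau_gen_inv n (fst l) t)"

definition burau :: "nat \<Rightarrow> letter list \<Rightarrow> real \<Rightarrow> real mat" where
  "burau n w t = foldl (\<lambda>M l. M * burau_letter n l t) (1\<^sub>m n) w"

end

theory Submission
  imports Defs "HOL-Combinatorics.Cycles"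
begin

(* Give the r-th crossing its own parameter t_r = exp h_r. By the chain rule, the
   h-derivative of det (I - x B(exp h)) at 0 is the sum over r of the derivatives with only the
   r-th crossing deformed; this is organised with first-order jets in infinitesimals delta_r.
   With only crossing r deformed, conjugating by the permutation matrix of the crossings above it
   turns the matrix into M(tau) P_q, where q is the permutation of the diagram with crossing r
   smoothed and M(tau) = tau P + (1 - tau) P' is the Burau block, tau = t^eps_r.
   Thus I - x M(tau) P_q is an affine combination, in a single row, of I - x P_pi and I - x P_F:
   pi is the permutation of the knot, a single n-cycle, and F agrees with pi except at the
   ascending position, where it follows the smoothed string. The functional graph of F is one
   cycle of length m(r) with trees attached, so det (I - x P_F) = 1 - x^m(r), while
   det (I - x P_pi) = 1 - x^n. The determinant is therefore 1 - x^m(r) + tau (x^m(r) - x^n),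
   with derivative eps_r (x^m(r) - x^n), and summing over r gives
   a_1(x) = sum_r eps_r x^m(r) - (sum_r eps_r) x^n. *)

(* The matrix library makes One_nat_def a simp rule, which would turn {1..n} into {Suc 0..n}. *)
declare One_nat_def [simp del]

section \<open>First-order jets\<close>

text \<open>\<open>Jet c d\<close> stands for \<open>c + \<Sum>\<^sub>j d j \<delta>\<^sub>j\<close> with \<open>\<delta>\<^sub>i \<delta>\<^sub>j = 0\<close>.\<close>
datatype jet = Jet (jet_val: real) (jet_diff: "nat \<Rightarrow> real")

instantiation jet :: comm_ring_1
begin
definition "0 = Jet 0 (\<lambda>_. 0)"
definition "1 = Jet 1 (\<lambda>_. 0)"
definition "d + e = Jet (jet_val d + jet_val e) (\<lambda>j. jet_diff d j + jet_diff e j)"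
definition "d - e = Jet (jet_val d - jet_val e) (\<lambda>j. jet_diff d j - jet_diff e j)"
definition "- d = Jet (- jet_val d) (\<lambda>j. - jet_diff d j)"
definition "d * e = Jet (jet_val d * jet_val e) (\<lambda>j. jet_val d * jet_diff e j + jet_val e * jet_diff d j)"
instance
  by standard (auto simp: zero_jet_def one_jet_def plus_jet_def minus_jet_def uminus_jet_def
      times_jet_def algebra_simps jet.expand fun_eq_iff)
end

lemma jet_eq_iff: "d = e \<longleftrightarrow> jet_val d = jet_val e \<and> (\<forall>j. jet_diff d j = jet_diff e j)"
  by (auto intro: jet.expand)

lemma jet_val_simps [simp]:
  "jet_val 0 = 0" "jet_val 1 = 1"
  "jet_val (d + e) = jet_val d + jet_val e" "jet_val (d - e) = jet_val d - jet_val e"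
  "jet_val (- d) = - jet_val d" "jet_val (d * e) = jet_val d * jet_val e"
  by (simp_all add: zero_jet_def one_jet_def plus_jet_def minus_jet_def uminus_jet_def times_jet_def)

lemma jet_diff_simps [simp]:
  "jet_diff 0 j = 0" "jet_diff 1 j = 0"
  "jet_diff (d + e) j = jet_diff d j + jet_diff e j" "jet_diff (d - e) j = jet_diff d j - jet_diff e j"
  "jet_diff (- d) j = - jet_diff d j"
  "jet_diff (d * e) j = jet_val d * jet_diff e j + jet_val e * jet_diff d j"
  by (simp_all add: zero_jet_def one_jet_def plus_jet_def minus_jet_def uminus_jet_def times_jet_def)

definition jet_const :: "real \<Rightarrow> jet" where
  "jet_const c = Jet c (\<lambda>_. 0)"

definition jet_delta :: "nat \<Rightarrow> jet" where
  "jet_delta i = Jet 0 (\<lambda>j. if j = i then 1 else 0)"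

lemma jet_const_simps [simp]: "jet_val (jet_const c) = c" "jet_diff (jet_const c) j = 0"
  by (simp_all add: jet_const_def)

lemma jet_delta_simps [simp]:
  "jet_val (jet_delta i) = 0" "jet_diff (jet_delta i) j = (if j = i then 1 else 0)"
  by (simp_all add: jet_delta_def)

lemma jet_const_0 [simp]: "jet_const 0 = 0"
  and jet_const_1 [simp]: "jet_const 1 = 1"
  by (simp_all add: jet_eq_iff)

lemma jet_const_power: "jet_const c ^ k = jet_const (c ^ k)"
  by (induction k) (simp_all add: jet_eq_iff)

lemma jet_of_int: "of_int k = jet_const (of_int k)"
proof -
  have "of_nat m = jet_const (of_nat m)" for m
    by (induction m) (simp_all add: jet_eq_iff)
  then show ?thesis
    by (cases k) (simp_all add: jet_eq_iff)
qed

definition jet_restrict :: "nat \<Rightarrow> jet \<Rightarrow> jet" where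
  "jet_restrict r d = Jet (jet_val d) (\<lambda>j. if j = r then jet_diff d r else 0)"

lemma comm_ring_hom_jet_restrict: "comm_ring_hom (jet_restrict r)"
  by unfold_locales (auto simp: jet_restrict_def jet_eq_iff algebra_simps)

lemma jet_restrict_const [simp]: "jet_restrict r (jet_const c) = jet_const c"
  by (simp add: jet_restrict_def jet_eq_iff)

lemma jet_diff_restrict [simp]: "jet_diff (jet_restrict r d) r = jet_diff d r"
  by (simp add: jet_restrict_def)

text \<open>\<open>has_jet k f d\<close>: restricted to the diagonal \<open>\<delta>\<^sub>0 = \<dots> = \<delta>\<^sub>k\<^sub>-\<^sub>1 = h\<close>, the jet \<open>d\<close> is the
  first-order Taylor expansion of \<open>f\<close> at \<open>0\<close>.\<close>
definition has_jet :: "nat \<Rightarrow> (real \<Rightarrow> real) \<Rightarrow> jet \<Rightarrow> bool" where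
  "has_jet k f d \<longleftrightarrow> f 0 = jet_val d \<and> (f has_real_derivative (\<Sum>j<k. jet_diff d j)) (at 0)"

lemma has_jet_const: "has_jet k (\<lambda>_. c) (jet_const c)"
  by (simp add: has_jet_def)

lemma has_jet_add: "has_jet k f d \<Longrightarrow> has_jet k g e \<Longrightarrow> has_jet k (\<lambda>h. f h + g h) (d + e)"
  unfolding has_jet_def by (auto intro!: derivative_eq_intros simp: sum.distrib)

lemma has_jet_diff: "has_jet k f d \<Longrightarrow> has_jet k g e \<Longrightarrow> has_jet k (\<lambda>h. f h - g h) (d - e)"
  unfolding has_jet_def by (auto intro!: derivative_eq_intros simp: sum_subtractf)

lemma has_jet_mult: "has_jet k f d \<Longrightarrow> has_jet k g e \<Longrightarrow> has_jet k (\<lambda>h. f h * g h) (d * e)"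
  unfolding has_jet_def
  by (auto intro!: derivative_eq_intros simp: sum.distrib sum_distrib_left algebra_simps)

lemma has_jet_sum:
  "finite A \<Longrightarrow> (\<And>a. a \<in> A \<Longrightarrow> has_jet k (f a) (d a)) \<Longrightarrow> has_jet k (\<lambda>h. \<Sum>a\<in>A. f a h) (\<Sum>a\<in>A. d a)"
  by (induction A rule: finite_induct) (use has_jet_const[of k 0] in \<open>auto intro: has_jet_add\<close>)

lemma has_jet_prod:
  "finite A \<Longrightarrow> (\<And>a. a \<in> A \<Longrightarrow> has_jet k (f a) (d a)) \<Longrightarrow> has_jet k (\<lambda>h. \<Prod>a\<in>A. f a h) (\<Prod>a\<in>A. d a)"
  by (induction A rule: finite_induct) (use has_jet_const[of k 1] in \<open>auto intro: has_jet_mult\<close>)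

lemma has_jet_if:
  "has_jet k f d \<Longrightarrow> has_jet k g e \<Longrightarrow> has_jet k (\<lambda>h. if c then f h else g h) (if c then d else e)"
  by (cases c) auto

lemma has_jet_exp: "j < k \<Longrightarrow> has_jet k exp (1 + jet_delta j)"
  unfolding has_jet_def by (auto intro!: derivative_eq_intros)

lemma has_jet_inverse_exp:
  assumes "j < k"
  shows "has_jet k (\<lambda>h. 1 / exp h) (1 - jet_delta j)"
proof -
  have "((\<lambda>h. exp (- h)) has_real_derivative -1) (at 0)"
    by (auto intro!: derivative_eq_intros)
  with assms show ?thesis
    unfolding has_jet_def by (simp add: exp_minus field_simps sum_negf)
qed

definition mat_list_prod :: "nat \<Rightarrow> 'a::semiring_1 mat list \<Rightarrow> 'a mat" where
  "mat_list_prod n Ms = foldr (*) Ms (1\<^sub>m n)"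

lemma mat_list_prod_Nil [simp]: "mat_list_prod n [] = 1\<^sub>m n"
  and mat_list_prod_Cons [simp]: "mat_list_prod n (M # Ms) = M * mat_list_prod n Ms"
  by (simp_all add: mat_list_prod_def)

lemma mat_list_prod_carrier: "set Ms \<subseteq> carrier_mat n n \<Longrightarrow> mat_list_prod n Ms \<in> carrier_mat n n"
  by (induction Ms) auto

lemma mat_list_prod_append:
  assumes "set Ms \<subseteq> carrier_mat n n" "set Ns \<subseteq> carrier_mat n n"
  shows "mat_list_prod n (Ms @ Ns) = mat_list_prod n Ms * mat_list_prod n Ns"
  using assms
proof (induction Ms)
  case (Cons M Ms)
  then show ?case
    using mat_list_prod_carrier[of Ms n] mat_list_prod_carrier[of Ns n]
    by (simp add: assoc_mult_mat[of M n n _ n _ n])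
next
  case Nil
  then show ?case
    using left_mult_one_mat[OF mat_list_prod_carrier[of Ns n]] by simp
qed

lemma foldl_mult_eq_mat_list_prod:
  assumes "A \<in> carrier_mat n n" "set Ms \<subseteq> carrier_mat n n"
  shows "foldl (*) A Ms = A * mat_list_prod n Ms"
  using assms
proof (induction Ms arbitrary: A)
  case (Cons M Ms)
  then show ?case
    using mat_list_prod_carrier[of Ms n] by (simp add: assoc_mult_mat[of A n n M n _ n])
qed simp

lemma map_mat_mat_list_prod:
  assumes "comm_ring_hom h" "set Ms \<subseteq> carrier_mat n n"
  shows "map_mat h (mat_list_prod n Ms) = mat_list_prod n (map (map_mat h) Ms)"
  using assms(2)
proof (induction Ms)
  case Nil
  interpret comm_ring_hom h by (rule assms(1))
  show ?case by (simp add: mat_hom_one)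
next
  case (Cons M Ms)
  interpret comm_ring_hom h by (rule assms(1))
  from Cons show ?case
    using mat_list_prod_carrier[of Ms n] by (simp add: mat_hom_mult[of M n n _ n])
qed

definition mat_has_jet :: "nat \<Rightarrow> nat \<Rightarrow> (real \<Rightarrow> real mat) \<Rightarrow> jet mat \<Rightarrow> bool" where
  "mat_has_jet k n F D \<longleftrightarrow> D \<in> carrier_mat n n \<and> (\<forall>h. F h \<in> carrier_mat n n) \<and>
     (\<forall>a<n. \<forall>b<n. has_jet k (\<lambda>h. F h $$ (a, b)) (D $$ (a, b)))"

lemma mat_has_jet_mult:
  assumes F: "mat_has_jet k n F D" and G: "mat_has_jet k n G E"
  shows "mat_has_jet k n (\<lambda>h. F h * G h) (D * E)"
proof -
  have dims: "dim_row (F h) = n" "dim_col (F h) = n" "dim_row (G h) = n" "dim_col (G h) = n" for h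
    using F G by (auto simp: mat_has_jet_def)
  have "has_jet k (\<lambda>h. (F h * G h) $$ (a, b)) ((D * E) $$ (a, b))" if "a < n" "b < n" for a b
  proof -
    have "has_jet k (\<lambda>h. \<Sum>c<n. F h $$ (a, c) * G h $$ (c, b)) (\<Sum>c<n. D $$ (a, c) * E $$ (c, b))"
      using F G that by (intro has_jet_sum has_jet_mult) (auto simp: mat_has_jet_def)
    with F G that dims show ?thesis
      by (auto simp: mat_has_jet_def scalar_prod_def atLeast0LessThan)
  qed
  with F G show ?thesis
    unfolding mat_has_jet_def by (auto intro: mult_carrier_mat)
qed

lemma mat_has_jet_mat_list_prod:
  "list_all2 (mat_has_jet k n) Fs Ds \<Longrightarrow>
   mat_has_jet k n (\<lambda>h. mat_list_prod n (map (\<lambda>F. F h) Fs)) (mat_list_prod n Ds)"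
proof (induction Fs Ds rule: list_all2_induct)
  case Nil
  then show ?case
    by (auto simp: mat_has_jet_def has_jet_def)
next
  case (Cons F Fs D Ds)
  then show ?case
    using mat_has_jet_mult[of k n F D] by simp
qed

lemma mat_has_jet_one_minus_smult:
  assumes "mat_has_jet k n F D"
  shows "mat_has_jet k n (\<lambda>h. 1\<^sub>m n - x \<cdot>\<^sub>m F h) (1\<^sub>m n - jet_const x \<cdot>\<^sub>m D)"
proof -
  have F: "F h \<in> carrier_mat n n" for h
    using assms by (simp add: mat_has_jet_def)
  have D: "D \<in> carrier_mat n n"
    using assms by (simp add: mat_has_jet_def)
  have "has_jet k (\<lambda>h. (1\<^sub>m n - x \<cdot>\<^sub>m F h) $$ (a, b)) ((1\<^sub>m n - jet_const x \<cdot>\<^sub>m D) $$ (a, b))"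
    if "a < n" "b < n" for a b
  proof -
    have "has_jet k (\<lambda>h. (if a = b then 1 else 0) - x * F h $$ (a, b))
        ((if a = b then 1 else 0) - jet_const x * D $$ (a, b))"
      using assms that has_jet_const[of k 0] has_jet_const[of k 1]
      by (intro has_jet_diff has_jet_mult has_jet_if has_jet_const) (auto simp: mat_has_jet_def)
    moreover have "dim_row (F h) = n" "dim_col (F h) = n" for h
      using F by auto
    ultimately show ?thesis
      using D that by simp
  qed
  with assms F show ?thesis
    unfolding mat_has_jet_def by (auto intro!: minus_carrier_mat smult_carrier_mat)
qed

lemma has_jet_det:
  assumes "mat_has_jet k n F D"
  shows "has_jet k (\<lambda>h. det (F h)) (det D)"
proof -
  have "has_jet k (\<lambda>h. \<Sum>p | p permutes {0..<n}. signof p * (\<Prod>a = 0..<n. F h $$ (a, p a)))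
      (\<Sum>p | p permutes {0..<n}. signof p * (\<Prod>a = 0..<n. D $$ (a, p a)))"
  proof (intro has_jet_sum has_jet_mult has_jet_prod)
    fix p a assume "p \<in> {p. p permutes {0..<n}}" "a \<in> {0..<n}"
    with assms show "has_jet k (\<lambda>h. F h $$ (a, p a)) (D $$ (a, p a))"
      by (auto simp: mat_has_jet_def permutes_in_image)
  qed (auto simp: finite_permutations jet_of_int intro: has_jet_const)
  with assms show ?thesis
    by (simp add: mat_has_jet_def det_def'[of _ n])
qed

text \<open>The 0/1 matrix of a map \<open>g\<close> of positions: the row of position \<open>p\<close> has its single 1 in
  the column of position \<open>g p\<close> (positions are 1-based, matrix indices 0-based).\<close>
definition fun_mat :: "nat \<Rightarrow> (nat \<Rightarrow> nat) \<Rightarrow> 'a::comm_ring_1 mat" where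
  "fun_mat n g = mat n n (\<lambda>(a, b). if Suc b = g (Suc a) then 1 else 0)"

lemma fun_mat_carrier [simp]: "fun_mat n g \<in> carrier_mat n n"
  and dim_fun_mat [simp]: "dim_row (fun_mat n g) = n" "dim_col (fun_mat n g) = n"
  by (simp_all add: fun_mat_def)

lemma index_fun_mat [simp]:
  "a < n \<Longrightarrow> b < n \<Longrightarrow> fun_mat n g $$ (a, b) = (if Suc b = g (Suc a) then 1 else 0)"
  by (simp add: fun_mat_def)

lemma fun_mat_id: "fun_mat n id = 1\<^sub>m n"
  by (rule eq_matI) auto

lemma fun_mat_mult:
  assumes "g ` {1..n} \<subseteq> {1..n}"
  shows "fun_mat n g * fun_mat n h = fun_mat n (h \<circ> g)"
proof (rule eq_matI)
  fix a b assume "a < dim_row (fun_mat n (h \<circ> g))" "b < dim_col (fun_mat n (h \<circ> g))"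
  then have ab: "a < n" "b < n" by simp_all
  with assms have "g (Suc a) \<in> {1..n}" by (auto simp: image_subset_iff)
  then obtain c where c: "g (Suc a) = Suc c" "c < n"
    by (cases "g (Suc a)") auto
  have "(fun_mat n g * fun_mat n h) $$ (a, b) =
      (\<Sum>c'\<in>{0..<n}. (if c' = c then 1 else 0) * (if Suc b = h (Suc c') then 1 else 0))"
    using ab c by (simp add: scalar_prod_def)
  also have "\<dots> = (\<Sum>c'\<in>{0..<n}. if c' = c then (if Suc b = h (Suc c') then 1 else 0) else 0)"
    by (rule sum.cong) auto
  also have "\<dots> = fun_mat n (h \<circ> g) $$ (a, b)"
    using ab c by simp
  finally show "(fun_mat n g * fun_mat n h) $$ (a, b) = fun_mat n (h \<circ> g) $$ (a, b)" .
qed auto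

lemma swap_pos_eq_transpose: "swap_pos i = transpose i (i + 1)"
  by (auto simp: fun_eq_iff swap_pos_def transpose_def)

lemma follow_Nil [simp]: "follow [] = id"
  and follow_Cons [simp]: "follow (l # ws) = follow ws \<circ> swap_pos (fst l)"
  by (simp_all add: follow_def fun_eq_iff)

lemma follow_append: "follow (ws @ vs) = follow vs \<circ> follow ws"
  by (simp add: follow_def fun_eq_iff)

lemma swap_pos_swap_pos [simp]: "swap_pos i (swap_pos i p) = p"
  by (simp add: swap_pos_def)

lemma follow_rev_follow [simp]: "follow (rev ws) (follow ws p) = p"
  by (induction ws arbitrary: p) (simp_all add: follow_append)

lemma follow_follow_rev [simp]: "follow ws (follow (rev ws) p) = p"
  using follow_rev_follow[of "rev ws"] by simp

lemma braid_word_iff: "braid_word n w \<longleftrightarrow> (\<forall>l\<in>set w. 1 \<le> fst l \<and> fst l < n \<and> (snd l = 1 \<or> snd l = -1))"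
  by (auto simp: braid_word_def)

lemma braid_word_Cons:
  "braid_word n (l # ws) \<longleftrightarrow> 1 \<le> fst l \<and> fst l < n \<and> (snd l = 1 \<or> snd l = -1) \<and> braid_word n ws"
  by (auto simp: braid_word_iff)

lemma braid_word_nth:
  "braid_word n w \<Longrightarrow> r < length w \<Longrightarrow>
    1 \<le> fst (w ! r) \<and> fst (w ! r) < n \<and> (snd (w ! r) = 1 \<or> snd (w ! r) = -1)"
  by (simp add: braid_word_iff)

lemma braid_word_take: "braid_word n w \<Longrightarrow> braid_word n (take r w)"
  and braid_word_drop: "braid_word n w \<Longrightarrow> braid_word n (drop r w)"
  and braid_word_rev: "braid_word n w \<Longrightarrow> braid_word n (rev w)"
  by (auto simp: braid_word_def dest: in_set_takeD in_set_dropD)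

lemma swap_pos_permutes: "1 \<le> i \<Longrightarrow> i < n \<Longrightarrow> swap_pos i permutes {1..n}"
  by (simp add: swap_pos_eq_transpose permutes_swap_id)

lemma follow_permutes: "braid_word n ws \<Longrightarrow> follow ws permutes {1..n}"
  by (induction ws) (simp_all add: braid_word_Cons permutes_id permutes_compose swap_pos_permutes)

lemma mat_list_prod_fun_mat_follow:
  "braid_word n ws \<Longrightarrow> mat_list_prod n (map (\<lambda>l. fun_mat n (swap_pos (fst l))) ws) = fun_mat n (follow ws)"
proof (induction ws)
  case (Cons l ws)
  then have "swap_pos (fst l) permutes {1..n}" "braid_word n ws"
    by (simp_all add: braid_word_Cons swap_pos_permutes)
  with Cons show ?case
    by (simp add: fun_mat_mult permutes_image comp_def)
qed (simp add: fun_mat_id)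

definition ascending :: "letter \<Rightarrow> nat" where
  "ascending l = (if snd l = 1 then fst l else fst l + 1)"

definition letter_param :: "letter \<Rightarrow> 'a \<Rightarrow> 'a \<Rightarrow> 'a" where
  "letter_param l t t' = (if snd l = 1 then t else t')"

text \<open>The Burau matrix of a letter over an arbitrary commutative ring, with \<open>t'\<close> in the role of
  \<open>t\<^sup>-\<^sup>1\<close>.\<close>
definition burau_factor :: "nat \<Rightarrow> letter \<Rightarrow> 'a::comm_ring_1 \<Rightarrow> 'a \<Rightarrow> 'a mat" where
  "burau_factor n l t t' = letter_param l t t' \<cdot>\<^sub>m fun_mat n (swap_pos (fst l)) +
     (1 - letter_param l t t') \<cdot>\<^sub>m fun_mat n ((swap_pos (fst l))(ascending l := ascending l))"

lemma burau_factor_carrier [simp]: "burau_factor n l t t' \<in> carrier_mat n n"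
  by (simp add: burau_factor_def letter_param_def)

lemma burau_letter_eq_burau_factor:
  assumes "1 \<le> fst l" "fst l < n"
  shows "burau_letter n l t = burau_factor n l t (1 / t)"
proof -
  obtain i e where l: "l = (Suc i, e)"
    using assms by (cases l; cases "fst l") auto
  show ?thesis
    using assms unfolding l
    by (intro eq_matI) (auto simp: burau_letter_def burau_gen_def burau_gen_inv_def burau_factor_def
        letter_param_def ascending_def swap_pos_def)
qed

lemma burau_factor_one: "burau_factor n l 1 1 = fun_mat n (swap_pos (fst l))"
  by (rule eq_matI) (simp_all add: burau_factor_def letter_param_def)

lemma map_mat_burau_factor:
  assumes "comm_ring_hom h"
  shows "map_mat h (burau_factor n l t t') = burau_factor n l (h t) (h t')"
proof -
  interpret comm_ring_hom h by (rule assms)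
  show ?thesis
    by (rule eq_matI) (auto simp: burau_factor_def letter_param_def hom_distribs)
qed

lemma burau_eq_mat_list_prod:
  assumes "braid_word n w"
  shows "burau n w t = mat_list_prod n (map (\<lambda>l. burau_factor n l t (1 / t)) w)"
proof -
  let ?Ms = "map (\<lambda>l. burau_factor n l t (1 / t)) w"
  have "map (\<lambda>l. burau_letter n l t) w = ?Ms"
    using assms by (auto simp: braid_word_def burau_letter_eq_burau_factor)
  then have "burau n w t = foldl (*) (1\<^sub>m n) ?Ms"
    by (metis burau_def foldl_map)
  also have "\<dots> = 1\<^sub>m n * mat_list_prod n ?Ms"
    by (rule foldl_mult_eq_mat_list_prod) auto
  also have "\<dots> = mat_list_prod n ?Ms"
    by (rule left_mult_one_mat, rule mat_list_prod_carrier) auto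
  finally show ?thesis .
qed

lemma mat_has_jet_burau_factor:
  assumes "has_jet k f t" "has_jet k f' t'"
  shows "mat_has_jet k n (\<lambda>h. burau_factor n l (f h) (f' h)) (burau_factor n l t t')"
proof -
  have "has_jet k (\<lambda>h. \<tau> h * (if P then 1 else 0) + (1 - \<tau> h) * (if Q then 1 else 0))
      (\<tau>' * (if P then 1 else 0) + (1 - \<tau>') * (if Q then 1 else 0))"
    if "has_jet k \<tau> \<tau>'" for \<tau> \<tau>' P Q
    using that has_jet_const[of k 0] has_jet_const[of k 1]
    by (intro has_jet_add has_jet_mult has_jet_diff has_jet_if) auto
  with assms show ?thesis
    by (auto simp: mat_has_jet_def burau_factor_def letter_param_def)
qed

section \<open>The determinant of \<open>I - x A\<^sub>f\<close> for a map \<open>f\<close> with a single cycle\<close>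

definition det_on :: "'a set \<Rightarrow> ('a \<Rightarrow> 'a \<Rightarrow> 'b::comm_ring_1) \<Rightarrow> 'b" where
  "det_on S A = (\<Sum>p | p permutes S. of_int (sign p) * (\<Prod>a\<in>S. A a (p a)))"

definition id_minus_adj :: "'b::comm_ring_1 \<Rightarrow> ('a \<Rightarrow> 'a) \<Rightarrow> 'a \<Rightarrow> 'a \<Rightarrow> 'b" where
  "id_minus_adj x f a b = (if a = b then 1 else 0) - x * (if b = f a then 1 else 0)"

lemma det_on_cong: "(\<And>a b. a \<in> S \<Longrightarrow> A a b = B a b) \<Longrightarrow> det_on S A = det_on S B"
  unfolding det_on_def by (intro sum.cong refl arg_cong2[where f = "(*)"] prod.cong) auto

lemma det_on_remove_unit_column:
  assumes S: "finite S" and v: "v \<in> S" and col: "\<And>a. a \<in> S \<Longrightarrow> A a v = (if a = v then 1 else 0)"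
  shows "det_on S A = det_on (S - {v}) A"
proof -
  let ?term = "\<lambda>p. of_int (sign p) * (\<Prod>a\<in>S. A a (p a))"
  have "?term p = 0" if p: "p permutes S" "\<not> p permutes S - {v}" for p
  proof -
    have "p v \<noteq> v"
      using p permutes_superset[OF p(1), of "S - {v}"] by auto
    moreover obtain a where "a \<in> S" "p a = v"
      using permutes_image[OF p(1)] v by (metis imageE)
    ultimately have "A a (p a) = 0" and "a \<in> S"
      using col by auto
    with S show ?thesis
      by (metis mult_zero_right prod_zero)
  qed
  then have "det_on S A = (\<Sum>p | p permutes S - {v}. ?term p)"
    unfolding det_on_def using S
    by (intro sum.mono_neutral_right) (auto simp: finite_permutations intro: permutes_subset)
  also have "\<dots> = det_on (S - {v}) A"
    unfolding det_on_def
  proof (intro sum.cong refl)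
    fix p assume "p \<in> {p. p permutes S - {v}}"
    then have "p v = v"
      by (simp add: permutes_not_in)
    with S v col show "?term p = of_int (sign p) * (\<Prod>a\<in>S - {v}. A a (p a))"
      by (simp add: prod.remove)
  qed
  finally show ?thesis .
qed

lemma sign_cycle_of_list:
  "distinct cs \<Longrightarrow> cs \<noteq> [] \<Longrightarrow> sign (cycle_of_list cs) = (-1) ^ (length cs - 1)"
proof (induction cs rule: cycle_of_list.induct)
  case (1 i j cs)
  then have ij: "i \<noteq> j" and IH: "sign (cycle_of_list (j # cs)) = (-1) ^ length cs"
    by auto
  have "sign (cycle_of_list (i # j # cs)) = sign (transpose i j) * sign (cycle_of_list (j # cs))"
    unfolding cycle_of_list.simps
    by (rule sign_compose) (simp_all add: permutation_swap_id permutation_of_cycle)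
  also have "\<dots> = (-1) ^ (length (i # j # cs) - 1)"
    using ij IH by (simp add: sign_swap_id)
  finally show ?case .
qed simp_all

lemma permutation_funpow_reverse:
  assumes "permutation p"
  shows "\<exists>j. (p ^^ j) ((p ^^ k) s) = s"
proof -
  obtain N where N: "p ^^ N = id" "0 < N"
    using permutation_is_nilpotent[OF assms] by blast
  have "(p ^^ ((N - 1) * k)) ((p ^^ k) s) = (p ^^ ((N - 1) * k + k)) s"
    by (simp add: funpow_add)
  also have "(N - 1) * k + k = N * k"
    using N(2) by (cases N) auto
  also have "p ^^ (N * k) = id"
    using N(1) by (metis funpow_mult id_funpow)
  finally show ?thesis
    by auto
qed

context
  fixes S :: "'a set" and p :: "'a \<Rightarrow> 'a" and c :: 'a
  assumes finite: "finite S" and permutes: "p permutes S" and c: "c \<in> S"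
    and reach: "\<And>s. s \<in> S \<Longrightarrow> \<exists>k. (p ^^ k) s = c"
begin

lemma single_cycle_permutation: "permutation p"
  using finite permutes permutation_permutes by blast

lemma set_support_single_cycle: "set (support p c) = S"
proof
  show "set (support p c) \<subseteq> S"
    using c permutes_in_image[OF permutes_funpow[OF permutes]] by auto
  show "S \<subseteq> set (support p c)"
  proof
    fix s assume "s \<in> S"
    with reach obtain k where "(p ^^ k) s = c"
      by blast
    with permutation_funpow_reverse[OF single_cycle_permutation, of k s] show "s \<in> set (support p c)"
      unfolding support_set[OF single_cycle_permutation] by (metis rangeI)
  qed
qed

lemma least_power_single_cycle: "least_power p c = card S"
proof -
  have "length (support p c) = card S"
    using distinct_card[OF cycle_of_permutation[OF single_cycle_permutation]] set_support_single_cycle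
    by metis
  then show ?thesis
    by simp
qed

lemma sign_single_cycle: "sign p = (-1) ^ (card S - 1)"
proof -
  have "p = cycle_of_list (support p c)"
  proof
    fix b show "p b = cycle_of_list (support p c) b"
      using cycle_restrict[OF single_cycle_permutation] id_outside_supp[of b "support p c"]
        set_support_single_cycle permutes_not_in[OF permutes] by metis
  qed
  then have "sign p = sign (cycle_of_list (support p c))"
    by (rule arg_cong)
  also have "\<dots> = (-1) ^ (length (support p c) - 1)"
    using set_support_single_cycle c
    by (intro sign_cycle_of_list cycle_of_permutation single_cycle_permutation) auto
  finally show ?thesis
    by (simp add: least_power_single_cycle)
qed

lemma single_cycle_transitive:
  assumes "d \<in> S" "s \<in> S"
  shows "\<exists>j. (p ^^ j) d = s"
proof -
  obtain k where "(p ^^ k) d = c"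
    using reach assms(1) by blast
  moreover obtain i where "(p ^^ i) c = s"
    using assms(2) set_support_single_cycle support_set[OF single_cycle_permutation] by auto
  ultimately have "(p ^^ (i + k)) d = s"
    by (simp add: funpow_add)
  then show ?thesis ..
qed

lemma permutes_between_id_and_single_cycle:
  assumes \<sigma>: "\<sigma> permutes S" and between: "\<And>a. a \<in> S \<Longrightarrow> \<sigma> a = a \<or> \<sigma> a = p a"
    and nofix: "\<And>a. a \<in> S \<Longrightarrow> p a \<noteq> a"
  shows "\<sigma> = id \<or> \<sigma> = p"
proof (cases "\<sigma> = id")
  case False
  then obtain d where "\<sigma> d \<noteq> d"
    by (auto simp: fun_eq_iff)
  then have d: "d \<in> S" "\<sigma> d = p d"
    using between permutes_not_in[OF \<sigma>] by blast+
  have in_S: "(p ^^ j) d \<in> S" for j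
    using d(1) permutes_in_image[OF permutes_funpow[OF permutes]] by blast
  have moves: "\<sigma> ((p ^^ j) d) = p ((p ^^ j) d)" for j
  proof (induction j)
    case (Suc j)
    have "\<sigma> ((p ^^ Suc j) d) \<noteq> (p ^^ Suc j) d"
    proof
      assume "\<sigma> ((p ^^ Suc j) d) = (p ^^ Suc j) d"
      with Suc have "\<sigma> ((p ^^ Suc j) d) = \<sigma> ((p ^^ j) d)"
        by simp
      then have "(p ^^ Suc j) d = (p ^^ j) d"
        using permutes_inj[OF \<sigma>] by (meson injD)
      with nofix[OF in_S[of j]] show False
        by simp
    qed
    with between[OF in_S[of "Suc j"]] show ?case
      by blast
  qed (simp add: d)
  have "\<sigma> s = p s" for s
    using moves single_cycle_transitive[OF d(1)] permutes_not_in[OF \<sigma>] permutes_not_in[OF permutes]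
    by (cases "s \<in> S") (metis, simp)
  then show ?thesis
    by auto
qed simp

lemma det_on_single_cycle: "det_on S (id_minus_adj x p) = 1 - x ^ card S"
proof (cases "card S = 1")
  case True
  then obtain a where "S = {a}"
    by (rule card_1_singletonE)
  with permutes show ?thesis
    by (simp add: det_on_def id_minus_adj_def)
next
  case False
  with finite c have "2 \<le> card S"
    by (cases "card S") (auto simp: card_eq_0_iff)
  have nofix: "p a \<noteq> a" if "a \<in> S" for a
  proof
    assume "p a = a"
    then have "(p ^^ k) a = a" for k
      by (induction k) auto
    with reach[OF that] have "p c = c"
      by (metis \<open>p a = a\<close>)
    then have "least_power p c \<le> 1"
      by (intro least_power_le) (auto simp: One_nat_def)
    with \<open>2 \<le> card S\<close> show False
      by (simp add: least_power_single_cycle)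
  qed
  let ?term = "\<lambda>\<sigma>. of_int (sign \<sigma>) * (\<Prod>a\<in>S. id_minus_adj x p a (\<sigma> a))"
  have "?term \<sigma> = 0" if \<sigma>: "\<sigma> permutes S" "\<sigma> \<noteq> id" "\<sigma> \<noteq> p" for \<sigma>
  proof -
    obtain a where a: "a \<in> S" "\<sigma> a \<noteq> a" "\<sigma> a \<noteq> p a"
      using permutes_between_id_and_single_cycle[OF \<sigma>(1) _ nofix] \<sigma>(2,3) by blast
    then have "id_minus_adj x p a (\<sigma> a) = 0"
      by (simp add: id_minus_adj_def)
    with a(1) finite show ?thesis
      by (metis mult_zero_right prod_zero)
  qed
  then have "det_on S (id_minus_adj x p) = (\<Sum>\<sigma>\<in>{id, p}. ?term \<sigma>)"
    unfolding det_on_def using finite permutes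
    by (intro sum.mono_neutral_right) (auto simp: finite_permutations permutes_id)
  also have "\<dots> = ?term id + ?term p"
    using nofix[OF c] by (subst sum.insert) (auto simp: fun_eq_iff intro: exI[of _ c])
  also have "?term id = 1"
    using nofix by (simp add: id_minus_adj_def eq_commute[of _ "p _"])
  also have "?term p = (-1) ^ (card S - 1) * (- x) ^ card S"
  proof -
    have "(\<Prod>a\<in>S. id_minus_adj x p a (p a)) = (\<Prod>a\<in>S. - x)"
      using nofix by (intro prod.cong) (auto simp: id_minus_adj_def dest: sym)
    then show ?thesis
      by (simp add: sign_single_cycle)
  qed
  also have "1 + (-1) ^ (card S - 1) * (- x) ^ card S = 1 - x ^ card S"
  proof -
    obtain N where N: "card S = Suc N"
      using \<open>2 \<le> card S\<close> by (cases "card S") auto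
    have "(-1) ^ N * (- x) ^ Suc N = - ((-1) ^ N * (-1) ^ N) * x ^ Suc N"
      by (simp add: power_minus[of x] algebra_simps)
    also have "(-1) ^ N * (-1) ^ N = (1 :: 'b)"
      by (simp flip: power_add)
    finally show ?thesis
      using N by simp
  qed
  finally show ?thesis .
qed

end

text \<open>Here \<open>f\<close> need not be injective: its functional graph on \<open>S\<close> is a single cycle through \<open>c\<close>
  with trees attached. Vertices outside the image of \<open>f\<close> give unit columns and can be removed
  one at a time until \<open>f\<close> permutes what is left, which is then a single cycle.\<close>
lemma det_on_id_minus_adj_unicyclic:
  assumes "finite S" "f ` S \<subseteq> S" "c \<in> S" "\<And>s. s \<in> S \<Longrightarrow> \<exists>k. (f ^^ k) s = c"
  shows "det_on S (id_minus_adj x f) = 1 - x ^ least_power f c"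
  using assms
proof (induction "card S" arbitrary: S rule: less_induct)
  case less
  note S = less.prems(1) and fS = less.prems(2) and c = less.prems(3) and reach = less.prems(4)
  show ?case
  proof (cases "S \<subseteq> f ` S")
    case True
    define p where "p a = (if a \<in> S then f a else a)" for a
    have "p permutes S"
    proof (rule bij_imp_permutes)
      have "inj_on f S"
        using S True by (rule finite_surj_inj)
      with True fS show "bij_betw p S S"
        by (auto simp: bij_betw_def inj_on_def p_def image_def)
    qed (simp add: p_def)
    have funpow_p: "(p ^^ k) s = (f ^^ k) s" if "s \<in> S" for k s
    proof (induction k)
      case (Suc k)
      have "(f ^^ k) s \<in> S"
        using fS that by (induction k) auto
      with Suc show ?case
        by (simp add: p_def)
    qed simp
    have "det_on S (id_minus_adj x f) = det_on S (id_minus_adj x p)"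
      by (rule det_on_cong) (simp add: id_minus_adj_def p_def)
    also have "\<dots> = 1 - x ^ card S"
      using S \<open>p permutes S\<close> c reach funpow_p by (intro det_on_single_cycle) auto
    also have "card S = least_power p c"
      using S \<open>p permutes S\<close> c reach funpow_p by (intro least_power_single_cycle[symmetric]) auto
    also have "least_power p c = least_power f c"
      using funpow_p[OF c] by (simp add: least_power_def)
    finally show ?thesis .
  next
    case False
    then obtain v where v: "v \<in> S" "v \<notin> f ` S"
      by blast
    obtain k where "(f ^^ k) (f c) = c"
      using reach fS c by blast
    then have "f ((f ^^ k) c) = c"
      by (metis funpow_swap1)
    moreover have "(f ^^ k) c \<in> S"
      using fS c by (induction k) auto
    ultimately have "c \<noteq> v"
      using v by force
    have "det_on S (id_minus_adj x f) = det_on (S - {v}) (id_minus_adj x f)"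
      using S v by (intro det_on_remove_unit_column) (auto simp: id_minus_adj_def)
    also have "\<dots> = 1 - x ^ least_power f c"
      using S v fS c \<open>c \<noteq> v\<close> reach card_Diff1_less[OF S v(1)]
      by (intro less.hyps) auto
    finally show ?thesis .
  qed
qed

lemma det_one_minus_fun_mat:
  assumes g: "g ` {1..n} \<subseteq> {1..n}" and c: "c \<in> {1..n}"
    and reach: "\<And>s. s \<in> {1..n} \<Longrightarrow> \<exists>k. (g ^^ k) s = c"
  shows "det (1\<^sub>m n - x \<cdot>\<^sub>m fun_mat n g) = 1 - x ^ least_power g c"
proof -
  define g' where "g' a = g (Suc a) - 1" for a
  have funpow_g': "(g' ^^ k) a = (g ^^ k) (Suc a) - 1 \<and> (g ^^ k) (Suc a) \<in> {1..n}" if "a < n" for k a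
  proof (induction k)
    case (Suc k)
    then have "(g ^^ k) (Suc a) \<in> {1..n}" "Suc ((g' ^^ k) a) = (g ^^ k) (Suc a)"
      by auto
    moreover from this(1) g have "g ((g ^^ k) (Suc a)) \<in> {1..n}"
      by blast
    ultimately show ?case
      by (simp add: g'_def[of "(g' ^^ k) a"])
  qed (use that in simp)
  have "det (1\<^sub>m n - x \<cdot>\<^sub>m fun_mat n g) = det_on {0..<n} (id_minus_adj x g')"
    unfolding det_def'[OF minus_carrier_mat[OF smult_carrier_mat[OF fun_mat_carrier]]] det_on_def
  proof (intro sum.cong refl arg_cong2[where f = "(*)"] prod.cong)
    fix p a assume "p \<in> {p. p permutes {0..<n}}" "a \<in> {0..<n}"
    then have "a < n" "p a < n"
      by (auto simp: permutes_in_image)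
    moreover have "Suc a \<in> {1..n}"
      using \<open>a < n\<close> by simp
    with g have "g (Suc a) \<in> {1..n}"
      by blast
    ultimately show "(1\<^sub>m n - x \<cdot>\<^sub>m fun_mat n g) $$ (a, p a) = id_minus_adj x g' a (p a)"
      by (auto simp: id_minus_adj_def g'_def)
  qed
  also have "\<dots> = 1 - x ^ least_power g' (c - 1)"
  proof (rule det_on_id_minus_adj_unicyclic)
    show "g' ` {0..<n} \<subseteq> {0..<n}"
      using funpow_g'[of _ "Suc 0"] by (force simp: g'_def)
    show "c - 1 \<in> {0..<n}"
      using c by auto
    show "\<exists>k. (g' ^^ k) s = c - 1" if "s \<in> {0..<n}" for s
      using reach[of "Suc s"] funpow_g'[of s] that by auto
  qed simp
  also have "least_power g' (c - 1) = least_power g c"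
  proof -
    have "c - 1 < n" "Suc (c - 1) = c"
      using c by auto
    have "(g' ^^ k) (c - 1) = c - 1 \<longleftrightarrow> (g ^^ k) c = c" for k
    proof -
      have "(g' ^^ k) (c - 1) = (g ^^ k) c - 1" "(g ^^ k) c \<in> {1..n}"
        using funpow_g'[of "c - 1" k] \<open>c - 1 < n\<close> \<open>Suc (c - 1) = c\<close> by auto
      with c show ?thesis
        by auto
    qed
    then show ?thesis
      by (simp add: least_power_def)
  qed
  finally show ?thesis .
qed

section \<open>Smoothing a crossing\<close>

text \<open>Smoothing a crossing of a single closed curve: \<open>q \<circ> transpose a b\<close> is the single cycle of the
  closed braid, \<open>q\<close> the permutation after smoothing, and \<open>(q \<circ> transpose a b)(a := q a)\<close> agrees
  with the former except at \<open>a\<close> and with the latter except at \<open>b\<close>.\<close>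
context
  fixes S :: "'a set" and q :: "'a \<Rightarrow> 'a" and a b :: 'a
  assumes finite: "finite S" and permutes: "q permutes S" and a: "a \<in> S" and b: "b \<in> S"
    and a_neq_b: "a \<noteq> b"
    and reach: "\<And>s. s \<in> S \<Longrightarrow> \<exists>k. ((q \<circ> transpose a b) ^^ k) s = a"
begin

lemma smoothed_funpow_in: "s \<in> S \<Longrightarrow> (q ^^ k) s \<in> S"
  using permutes_in_image[OF permutes_funpow[OF permutes]] by blast

text \<open>If the \<open>q\<close>-orbit of \<open>a\<close> reached \<open>b\<close>, its part after \<open>a\<close> up to \<open>b\<close> would be invariant
  under \<open>q \<circ> transpose a b\<close>, contain \<open>b\<close> but not \<open>a\<close>.\<close>
lemma smoothed_orbit_avoids: "(q ^^ j) a \<noteq> b"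
proof
  assume "(q ^^ j) a = b"
  define j0 where "j0 = (LEAST j. (q ^^ j) a = b)"
  have j0: "(q ^^ j0) a = b"
    unfolding j0_def by (rule LeastI) fact
  have j0_min: "(q ^^ s) a \<noteq> b" if "s < j0" for s
    using not_less_Least that unfolding j0_def by blast
  have "0 < j0"
    using j0 a_neq_b by (cases j0) auto
  have no_return: "(q ^^ s) a \<noteq> a" if "0 < s" "s < j0" for s
  proof
    assume "(q ^^ s) a = a"
    then have "(q ^^ (j0 - s)) a = (q ^^ (j0 - s + s)) a"
      by (simp add: funpow_add)
    with that j0 j0_min[of "j0 - s"] show False
      by simp
  qed
  define C where "C = (\<lambda>s. (q ^^ s) a) ` {0<..j0}"
  have invariant: "q (transpose a b y) \<in> C" if "y \<in> C" for y
  proof -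
    obtain s where s: "y = (q ^^ s) a" "0 < s" "s \<le> j0"
      using \<open>y \<in> C\<close> by (auto simp: C_def)
    show ?thesis
    proof (cases "s = j0")
      case True
      with s j0 have "q (transpose a b y) = (q ^^ Suc 0) a"
        by simp
      with \<open>0 < j0\<close> show ?thesis
        unfolding C_def by (intro image_eqI[where x = "Suc 0"]) auto
    next
      case False
      with s j0_min no_return have "transpose a b y = y"
        by (simp add: transpose_def)
      with s have "q (transpose a b y) = (q ^^ Suc s) a"
        by simp
      with s False show ?thesis
        unfolding C_def by (intro image_eqI[where x = "Suc s"]) auto
    qed
  qed
  have "b \<in> C"
    unfolding C_def using j0 \<open>0 < j0\<close> by (intro image_eqI[where x = j0]) auto
  then have orbit_in_C: "((q \<circ> transpose a b) ^^ k) b \<in> C" for k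
    by (induction k) (auto intro: invariant)
  have "a \<notin> C"
  proof
    assume "a \<in> C"
    then obtain s where s: "a = (q ^^ s) a" "0 < s" "s \<le> j0"
      by (auto simp: C_def)
    show False
    proof (cases "s = j0")
      case True
      with s j0 a_neq_b show False
        by simp
    next
      case False
      with s no_return[of s] show False
        by simp
    qed
  qed
  moreover obtain k where "((q \<circ> transpose a b) ^^ k) b = a"
    using reach b by blast
  ultimately show False
    using orbit_in_C by metis
qed

lemma funpow_smoothing: "(((q \<circ> transpose a b)(a := q a)) ^^ j) a = (q ^^ j) a"
proof (induction j)
  case (Suc j)
  have "((q \<circ> transpose a b)(a := q a)) p = q p" if "p \<noteq> b" for p
    using that by (simp add: transpose_def)
  with Suc smoothed_orbit_avoids[of j] show ?case
    by simp
qed simp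

lemma least_power_smoothing: "least_power ((q \<circ> transpose a b)(a := q a)) a = least_power q a"
  by (simp add: least_power_def funpow_smoothing)

lemma smoothing_maps: "(q \<circ> transpose a b)(a := q a) ` S \<subseteq> S"
  using permutes_in_image[OF permutes] permutes_in_image[OF permutes_swap_id[OF a b]] a by auto

lemma smoothing_reaches:
  assumes "s \<in> S"
  shows "\<exists>k. (((q \<circ> transpose a b)(a := q a)) ^^ k) s = a"
proof -
  define \<pi> where "\<pi> = q \<circ> transpose a b"
  define F where "F = \<pi>(a := q a)"
  define k0 where "k0 = (LEAST k. (\<pi> ^^ k) s = a)"
  have k0: "(\<pi> ^^ k0) s = a"
    unfolding k0_def \<pi>_def using reach[OF assms] by (rule LeastI_ex)
  have "(F ^^ j) s = (\<pi> ^^ j) s" if "j \<le> k0" for j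
    using that
  proof (induction j)
    case (Suc j)
    then have "(\<pi> ^^ j) s \<noteq> a"
      using not_less_Least[of j "\<lambda>k. (\<pi> ^^ k) s = a"] by (simp add: k0_def)
    with Suc show ?case
      by (simp add: F_def)
  qed simp
  with k0 have "(F ^^ k0) s = a"
    by simp
  then show ?thesis
    unfolding F_def \<pi>_def ..
qed

lemma least_power_smoothed_less_card: "least_power q a < card S"
proof -
  have perm: "permutation q"
    using finite permutes permutation_permutes by blast
  have "set (support q a) \<subseteq> S - {b}"
    using smoothed_orbit_avoids smoothed_funpow_in[OF a] by auto
  then have "card (set (support q a)) \<le> card (S - {b})"
    using finite by (intro card_mono) auto
  moreover have "card (set (support q a)) = least_power q a"
    using distinct_card[OF cycle_of_permutation[OF perm]] by simp
  moreover have "card (S - {b}) < card S"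
    using finite b by (rule card_Diff1_less)
  ultimately show ?thesis
    by linarith
qed

end

lemma det_affine_combination_single_row:
  assumes A: "A \<in> carrier_mat n n" and B: "B \<in> carrier_mat n n" and k: "k < n"
    and agree: "\<And>i j. i < n \<Longrightarrow> j < n \<Longrightarrow> i \<noteq> k \<Longrightarrow> A $$ (i, j) = B $$ (i, j)"
  shows "det (s \<cdot>\<^sub>m A + (1 - s) \<cdot>\<^sub>m B) = s * det A + (1 - s) * det B"
proof -
  let ?C = "s \<cdot>\<^sub>m A + (1 - s) \<cdot>\<^sub>m B"
  have C: "?C \<in> carrier_mat n n"
    using A B by simp
  have C_entry: "?C $$ (i, j) = s * A $$ (i, j) + (1 - s) * B $$ (i, j)" if "i < n" "j < n" for i j
    using A B that by simp
  have "(\<Prod>i = 0..<n. ?C $$ (i, p i)) =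
      s * (\<Prod>i = 0..<n. A $$ (i, p i)) + (1 - s) * (\<Prod>i = 0..<n. B $$ (i, p i))"
    if "p permutes {0..<n}" for p
  proof -
    let ?rest = "\<lambda>M. \<Prod>i \<in> {0..<n} - {k}. M $$ (i, p i)"
    have p: "i < n \<Longrightarrow> p i < n" for i
      using that by (auto simp: permutes_in_image)
    have C_off: "?C $$ (i, j) = A $$ (i, j)" if "i < n" "j < n" "i \<noteq> k" for i j
      using C_entry[OF that(1,2)] agree[OF that] by (simp add: algebra_simps)
    have rest: "?rest ?C = ?rest A" "?rest B = ?rest A"
      using p by (auto intro!: prod.cong C_off agree[symmetric])
    have "(\<Prod>i = 0..<n. ?C $$ (i, p i)) = ?C $$ (k, p k) * ?rest ?C"
      using k by (simp add: prod.remove)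
    also have "\<dots> = (s * A $$ (k, p k) + (1 - s) * B $$ (k, p k)) * ?rest A"
      unfolding rest(1) C_entry[OF k p[OF k]] ..
    also have "\<dots> = s * (A $$ (k, p k) * ?rest A) + (1 - s) * (B $$ (k, p k) * ?rest B)"
      unfolding rest(2) by (simp add: algebra_simps)
    also have "\<dots> = s * (\<Prod>i = 0..<n. A $$ (i, p i)) + (1 - s) * (\<Prod>i = 0..<n. B $$ (i, p i))"
      using k by (simp add: prod.remove)
    finally show ?thesis .
  qed
  then have "det ?C = (\<Sum>p | p permutes {0..<n}.
      s * (signof p * (\<Prod>i = 0..<n. A $$ (i, p i))) + (1 - s) * (signof p * (\<Prod>i = 0..<n. B $$ (i, p i))))"
    unfolding det_def'[OF C] by (intro sum.cong refl) (simp add: distrib_left mult.left_commute)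
  also have "\<dots> = s * det A + (1 - s) * det B"
    unfolding det_def'[OF A] det_def'[OF B] by (simp add: sum.distrib sum_distrib_left)
  finally show ?thesis .
qed

lemma det_one_minus_smult_mult_commute:
  fixes U V Y :: "'a::comm_ring_1 mat"
  assumes U: "U \<in> carrier_mat n n" and V: "V \<in> carrier_mat n n" and Y: "Y \<in> carrier_mat n n"
    and UV: "U * V = 1\<^sub>m n" and VU: "V * U = 1\<^sub>m n"
  shows "det (1\<^sub>m n - c \<cdot>\<^sub>m (U * Y)) = det (1\<^sub>m n - c \<cdot>\<^sub>m (Y * U))"
proof (rule det_similar, rule similar_matI)
  have YU: "Y * U \<in> carrier_mat n n"
    using Y U by simp
  have "U * (1\<^sub>m n - c \<cdot>\<^sub>m (Y * U)) = U - c \<cdot>\<^sub>m (U * (Y * U))"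
    using mult_minus_distrib_mat[OF U one_carrier_mat smult_carrier_mat[OF YU]]
      mult_smult_distrib[OF U YU] U by simp
  then have "U * (1\<^sub>m n - c \<cdot>\<^sub>m (Y * U)) * V = U * V - c \<cdot>\<^sub>m (U * (Y * U) * V)"
    using minus_mult_distrib_mat[OF U smult_carrier_mat[OF mult_carrier_mat[OF U YU]] V]
      mult_smult_assoc_mat[OF mult_carrier_mat[OF U YU] V] by simp
  also have "U * (Y * U) * V = U * Y"
    using U V Y UV by (simp add: assoc_mult_mat[of _ n n _ n _ n])
  finally show "1\<^sub>m n - c \<cdot>\<^sub>m (U * Y) = U * (1\<^sub>m n - c \<cdot>\<^sub>m (Y * U)) * V"
    using UV by simp
qed (use U V Y UV VU in auto)

lemma det_one_minus_smult_affine_smoothing: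
  fixes c \<tau> :: "'a::comm_ring_1"
  assumes q: "q permutes {1..n}" and a: "a \<in> {1..n}" and b: "b \<in> {1..n}" and "a \<noteq> b"
    and reach: "\<And>s. s \<in> {1..n} \<Longrightarrow> \<exists>k. ((q \<circ> transpose a b) ^^ k) s = a"
  shows "det (1\<^sub>m n - c \<cdot>\<^sub>m (\<tau> \<cdot>\<^sub>m fun_mat n (q \<circ> transpose a b) +
      (1 - \<tau>) \<cdot>\<^sub>m fun_mat n ((q \<circ> transpose a b)(a := q a))))
    = 1 - c ^ least_power q a + \<tau> * (c ^ least_power q a - c ^ n)"
proof -
  define \<pi> where "\<pi> = q \<circ> transpose a b"
  define F where "F = \<pi>(a := q a)"
  note smoothing = \<open>a \<noteq> b\<close> reach[folded \<pi>_def]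
  have \<pi>: "\<pi> permutes {1..n}"
    unfolding \<pi>_def using a b q by (intro permutes_compose permutes_swap_id)
  have "1\<^sub>m n - c \<cdot>\<^sub>m (\<tau> \<cdot>\<^sub>m fun_mat n \<pi> + (1 - \<tau>) \<cdot>\<^sub>m fun_mat n F) =
      \<tau> \<cdot>\<^sub>m (1\<^sub>m n - c \<cdot>\<^sub>m fun_mat n \<pi>) + (1 - \<tau>) \<cdot>\<^sub>m (1\<^sub>m n - c \<cdot>\<^sub>m fun_mat n F)"
    by (rule eq_matI) (auto simp: algebra_simps)
  also have "det \<dots> = \<tau> * det (1\<^sub>m n - c \<cdot>\<^sub>m fun_mat n \<pi>) + (1 - \<tau>) * det (1\<^sub>m n - c \<cdot>\<^sub>m fun_mat n F)"
    using a by (intro det_affine_combination_single_row[where k = "a - 1"]) (auto simp: F_def)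
  also have "det (1\<^sub>m n - c \<cdot>\<^sub>m fun_mat n \<pi>) = 1 - c ^ n"
  proof -
    have "det (1\<^sub>m n - c \<cdot>\<^sub>m fun_mat n \<pi>) = 1 - c ^ least_power \<pi> a"
      using permutes_image[OF \<pi>] a smoothing by (intro det_one_minus_fun_mat) auto
    also have "least_power \<pi> a = n"
      using \<pi> a reach least_power_single_cycle[of "{1..n}" \<pi> a] by (simp add: \<pi>_def)
    finally show ?thesis .
  qed
  also have "det (1\<^sub>m n - c \<cdot>\<^sub>m fun_mat n F) = 1 - c ^ least_power q a"
    using det_one_minus_fun_mat[of F n a c] a q b \<open>a \<noteq> b\<close> reach
      smoothing_maps smoothing_reaches least_power_smoothing
    unfolding F_def \<pi>_def by (metis finite_atLeastAtMost)
  also have "\<tau> * (1 - c ^ n) + (1 - \<tau>) * (1 - c ^ least_power q a) =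
      1 - c ^ least_power q a + \<tau> * (c ^ least_power q a - c ^ n)"
    by (simp add: algebra_simps)
  finally show ?thesis
    unfolding \<pi>_def F_def .
qed

lemma burau_factor_mult_fun_mat:
  assumes "1 \<le> fst l" "fst l < n"
  shows "burau_factor n l t t' * fun_mat n q =
    letter_param l t t' \<cdot>\<^sub>m fun_mat n (q \<circ> swap_pos (fst l)) +
    (1 - letter_param l t t') \<cdot>\<^sub>m fun_mat n ((q \<circ> swap_pos (fst l))(ascending l := q (ascending l)))"
proof -
  let ?s = "swap_pos (fst l)" and ?a = "ascending l" and ?\<tau> = "letter_param l t t'"
  have s: "?s ` {1..n} \<subseteq> {1..n}" and s': "?s(?a := ?a) ` {1..n} \<subseteq> {1..n}"
    using assms by (auto simp: swap_pos_def ascending_def)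
  have "burau_factor n l t t' * fun_mat n q =
      (?\<tau> \<cdot>\<^sub>m fun_mat n ?s) * fun_mat n q + ((1 - ?\<tau>) \<cdot>\<^sub>m fun_mat n (?s(?a := ?a))) * fun_mat n q"
    unfolding burau_factor_def by (rule add_mult_distrib_mat) auto
  also have "\<dots> = ?\<tau> \<cdot>\<^sub>m (fun_mat n ?s * fun_mat n q) +
      (1 - ?\<tau>) \<cdot>\<^sub>m (fun_mat n (?s(?a := ?a)) * fun_mat n q)"
    by (simp add: mult_smult_assoc_mat[of _ n n _ n])
  finally show ?thesis
    using s s' by (simp add: fun_mat_mult fun_upd_comp)
qed

lemma smoothed_turn_eq: "smoothed_turn w r = follow (take r w) \<circ> follow (drop (Suc r) w)"
  by (simp add: fun_eq_iff smoothed_turn_def)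

lemma smoothed_turn_permutes: "braid_word n w \<Longrightarrow> smoothed_turn w r permutes {1..n}"
  by (simp add: smoothed_turn_eq permutes_compose follow_permutes braid_word_take braid_word_drop)

lemma smoothed_turn_swap_pos_conj:
  assumes "r < length w"
  shows "smoothed_turn w r \<circ> swap_pos (fst (w ! r)) =
    follow (take r w) \<circ> follow w \<circ> follow (rev (take r w))"
proof -
  have "follow w = follow (drop (Suc r) w) \<circ> swap_pos (fst (w ! r)) \<circ> follow (take r w)"
    using follow_append[of "take r w" "w ! r # drop (Suc r) w"] id_take_nth_drop[OF assms]
    by (simp add: comp_assoc)
  then show ?thesis
    by (simp add: fun_eq_iff smoothed_turn_def)
qed

lemma smoothed_turn_swap_pos_reaches:
  assumes w: "braid_word n w" and knot: "is_knot_closure n w" and r: "r < length w"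
    and s: "s \<in> {1..n}" and c: "c \<in> {1..n}"
  shows "\<exists>k. ((smoothed_turn w r \<circ> swap_pos (fst (w ! r))) ^^ k) s = c"
proof -
  let ?T = "follow (take r w)" and ?T' = "follow (rev (take r w))"
  have "?T' ` {1..n} = {1..n}"
    using w by (simp add: permutes_image follow_permutes braid_word_take braid_word_rev)
  with s c knot obtain k where k: "(follow w ^^ k) (?T' s) = ?T' c"
    unfolding is_knot_closure_def by blast
  have "((?T \<circ> follow w \<circ> ?T') ^^ j) s = ?T ((follow w ^^ j) (?T' s))" for j
    by (induction j) simp_all
  with k have "((?T \<circ> follow w \<circ> ?T') ^^ k) s = c"
    by simp
  then show ?thesis
    unfolding smoothed_turn_swap_pos_conj[OF r] ..
qed

lemma m_turns_eq_least_power: "m_turns w r = least_power (smoothed_turn w r) (ascending (w ! r))"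
  by (simp add: m_turns_def least_power_def ascending_pos_def ascending_def conj_commute)

context
  fixes n :: nat and w :: "letter list" and r :: nat
  assumes w: "braid_word n w" and knot: "is_knot_closure n w" and r: "r < length w"
begin

lemma crossing_positions:
  obtains a b where "ascending (w ! r) = a" "a \<in> {1..n}" "b \<in> {1..n}" "a \<noteq> b"
    "swap_pos (fst (w ! r)) = transpose a b"
proof -
  let ?i = "fst (w ! r)"
  have i: "1 \<le> ?i" "?i < n"
    using braid_word_nth[OF w r] by simp_all
  show ?thesis
  proof (cases "snd (w ! r) = 1")
    case True
    with i show ?thesis
      by (intro that[of ?i "?i + 1"]) (auto simp: ascending_def swap_pos_eq_transpose)
  next
    case False
    with i show ?thesis
      by (intro that[of "?i + 1" ?i]) (auto simp: ascending_def swap_pos_eq_transpose transpose_commute)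
  qed
qed

lemma m_turns_bounds: "0 < m_turns w r \<and> m_turns w r < n"
proof -
  obtain a b where ab: "ascending (w ! r) = a" "a \<in> {1..n}" "b \<in> {1..n}" "a \<noteq> b"
    "swap_pos (fst (w ! r)) = transpose a b"
    by (rule crossing_positions)
  have q: "smoothed_turn w r permutes {1..n}"
    using w by (rule smoothed_turn_permutes)
  then have "0 < least_power (smoothed_turn w r) a"
    by (intro least_power_of_permutation(2)) (auto simp: permutation_permutes)
  moreover have "least_power (smoothed_turn w r) a < card {1..n}"
    using smoothed_turn_swap_pos_reaches[OF w knot r] ab q
    by (intro least_power_smoothed_less_card) auto
  ultimately show ?thesis
    using ab by (simp add: m_turns_eq_least_power)
qed

lemma det_one_minus_deformed_crossing:
  fixes c t t' :: "'a::comm_ring_1"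
  shows "det (1\<^sub>m n - c \<cdot>\<^sub>m (fun_mat n (follow (take r w)) *
      (burau_factor n (w ! r) t t' * fun_mat n (follow (drop (Suc r) w))))) =
    1 - c ^ m_turns w r + letter_param (w ! r) t t' * (c ^ m_turns w r - c ^ n)"
proof -
  obtain a b where ab: "ascending (w ! r) = a" "a \<in> {1..n}" "b \<in> {1..n}" "a \<noteq> b"
    "swap_pos (fst (w ! r)) = transpose a b"
    by (rule crossing_positions)
  let ?q = "smoothed_turn w r" and ?M = "burau_factor n (w ! r) t t'"
  let ?U = "fun_mat n (follow (take r w)) :: 'a mat" and ?V = "fun_mat n (follow (rev (take r w)))"
    and ?D = "fun_mat n (follow (drop (Suc r) w))"
  have T: "follow (take r w) permutes {1..n}" and T': "follow (rev (take r w)) permutes {1..n}"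
    and D: "follow (drop (Suc r) w) permutes {1..n}"
    using w by (simp_all add: follow_permutes braid_word_take braid_word_rev braid_word_drop)
  have i: "1 \<le> fst (w ! r)" "fst (w ! r) < n"
    using braid_word_nth[OF w r] by simp_all
  have "det (1\<^sub>m n - c \<cdot>\<^sub>m (?U * (?M * ?D))) = det (1\<^sub>m n - c \<cdot>\<^sub>m (?M * ?D * ?U))"
    using T T' by (intro det_one_minus_smult_mult_commute[where V = ?V])
      (auto simp: fun_mat_mult permutes_image fun_mat_id[unfolded id_def] comp_def
        intro: mult_carrier_mat[of _ n n _ n])
  also have "?M * ?D * ?U = ?M * fun_mat n ?q"
    using D by (simp add: assoc_mult_mat[of _ n n _ n _ n] fun_mat_mult permutes_image smoothed_turn_eq)
  also have "\<dots> = letter_param (w ! r) t t' \<cdot>\<^sub>m fun_mat n (?q \<circ> transpose a b) +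
      (1 - letter_param (w ! r) t t') \<cdot>\<^sub>m fun_mat n ((?q \<circ> transpose a b)(a := ?q a))"
    using burau_factor_mult_fun_mat[OF i] ab by simp
  also have "det (1\<^sub>m n - c \<cdot>\<^sub>m \<dots>) = 1 - c ^ least_power ?q a +
      letter_param (w ! r) t t' * (c ^ least_power ?q a - c ^ n)"
    using smoothed_turn_permutes[OF w] ab smoothed_turn_swap_pos_reaches[OF w knot r]
    by (intro det_one_minus_smult_affine_smoothing) auto
  finally show ?thesis
    using ab by (simp add: m_turns_eq_least_power)
qed

end

section \<open>The derivative of \<open>det (I - x B(exp h))\<close>\<close>

lemma map_nth_upt: "k \<le> length w \<Longrightarrow> map (\<lambda>j. g (w ! j)) [i..<k] = map g (drop i (take k w))"
  by (rule nth_equalityI) auto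

text \<open>The Burau matrix in which the \<open>j\<close>-th crossing carries its own infinitesimal \<open>\<delta>\<^sub>j\<close>;
  \<open>t = exp h\<close> corresponds to putting every \<open>\<delta>\<^sub>j\<close> equal to \<open>h\<close>.\<close>
definition burau_jet :: "nat \<Rightarrow> letter list \<Rightarrow> jet mat" where
  "burau_jet n w =
     mat_list_prod n
       (map (\<lambda>j. burau_factor n (w ! j) (1 + jet_delta j) (1 - jet_delta j)) [0..<length w])"

lemma burau_jet_carrier: "burau_jet n w \<in> carrier_mat n n"
  unfolding burau_jet_def by (rule mat_list_prod_carrier) auto

lemma has_jet_det_one_minus_burau:
  assumes "braid_word n w"
  shows "has_jet (length w) (\<lambda>h. det (1\<^sub>m n - x \<cdot>\<^sub>m burau n w (exp h)))
    (det (1\<^sub>m n - jet_const x \<cdot>\<^sub>m burau_jet n w))"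
proof -
  let ?Fs = "map (\<lambda>j h. burau_factor n (w ! j) (exp h) (1 / exp h)) [0..<length w]"
  have "burau n w (exp h) = mat_list_prod n (map (\<lambda>F. F h) ?Fs)" for h
    using burau_eq_mat_list_prod[OF assms]
      map_nth_upt[of "length w" w "\<lambda>l. burau_factor n l (exp h) (1 / exp h)" 0] by (simp add: comp_def)
  moreover have "list_all2 (mat_has_jet (length w) n) ?Fs
      (map (\<lambda>j. burau_factor n (w ! j) (1 + jet_delta j) (1 - jet_delta j)) [0..<length w])"
    by (auto simp: list_all2_conv_all_nth
        intro!: mat_has_jet_burau_factor has_jet_exp has_jet_inverse_exp)
  ultimately have "mat_has_jet (length w) n (\<lambda>h. burau n w (exp h)) (burau_jet n w)"
    unfolding burau_jet_def by (simp only: mat_has_jet_mat_list_prod)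
  then show ?thesis
    by (rule has_jet_det[OF mat_has_jet_one_minus_smult])
qed

lemma jet_restrict_one_plus_delta:
    "jet_restrict r (1 + jet_delta j) = (if j = r then 1 + jet_delta r else 1)"
  and jet_restrict_one_minus_delta:
    "jet_restrict r (1 - jet_delta j) = (if j = r then 1 - jet_delta r else 1)"
  by (simp_all add: jet_restrict_def jet_eq_iff)

lemma jet_restrict_burau_jet:
  assumes w: "braid_word n w" and r: "r < length w"
  shows "map_mat (jet_restrict r) (burau_jet n w) = fun_mat n (follow (take r w)) *
    (burau_factor n (w ! r) (1 + jet_delta r) (1 - jet_delta r) * fun_mat n (follow (drop (Suc r) w)))"
proof -
  let ?P = "\<lambda>l. fun_mat n (swap_pos (fst l)) :: jet mat"
  let ?M = "burau_factor n (w ! r) (1 + jet_delta r) (1 - jet_delta r)"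
  let ?F = "\<lambda>j. burau_factor n (w ! j)
    (jet_restrict r (1 + jet_delta j)) (jet_restrict r (1 - jet_delta j))"
  have "map_mat (jet_restrict r) (burau_jet n w) = mat_list_prod n (map (map_mat (jet_restrict r))
      (map (\<lambda>j. burau_factor n (w ! j) (1 + jet_delta j) (1 - jet_delta j)) [0..<length w]))"
    unfolding burau_jet_def by (rule map_mat_mat_list_prod[OF comm_ring_hom_jet_restrict]) auto
  also have "map (map_mat (jet_restrict r))
      (map (\<lambda>j. burau_factor n (w ! j) (1 + jet_delta j) (1 - jet_delta j)) [0..<length w]) =
      map ?F [0..<length w]"
    by (simp add: map_mat_burau_factor[OF comm_ring_hom_jet_restrict])
  also have "[0..<length w] = [0..<r] @ r # [Suc r..<length w]"
    using upt_add_eq_append[of 0 r "length w - r"] upt_conv_Cons[OF r] r by simp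
  also have "map ?F ([0..<r] @ r # [Suc r..<length w]) =
      map ?P (take r w) @ ?M # map ?P (drop (Suc r) w)"
  proof -
    have "map ?F [0..<r] = map (\<lambda>j. ?P (w ! j)) [0..<r]"
      "map ?F [Suc r..<length w] = map (\<lambda>j. ?P (w ! j)) [Suc r..<length w]"
      by (rule map_cong;
          simp add: jet_restrict_one_plus_delta jet_restrict_one_minus_delta burau_factor_one)+
    with r map_nth_upt[of r w ?P 0] map_nth_upt[of "length w" w ?P "Suc r"] show ?thesis
      by (simp add: jet_restrict_one_plus_delta jet_restrict_one_minus_delta)
  qed
  also have "mat_list_prod n \<dots> =
      fun_mat n (follow (take r w)) * (?M * fun_mat n (follow (drop (Suc r) w)))"
    using w by (subst mat_list_prod_append)
      (auto simp: mat_list_prod_fun_mat_follow braid_word_take braid_word_drop)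
  finally show ?thesis .
qed

lemma jet_diff_det_one_minus_burau_jet:
  assumes w: "braid_word n w" and knot: "is_knot_closure n w" and r: "r < length w"
  shows "jet_diff (det (1\<^sub>m n - jet_const x \<cdot>\<^sub>m burau_jet n w)) r =
    of_int (snd (w ! r)) * (x ^ m_turns w r - x ^ n)"
proof -
  interpret comm_ring_hom "jet_restrict r"
    by (rule comm_ring_hom_jet_restrict)
  let ?A = "1\<^sub>m n - jet_const x \<cdot>\<^sub>m burau_jet n w"
  let ?m = "m_turns w r" and ?\<tau> = "letter_param (w ! r) (1 + jet_delta r) (1 - jet_delta r)"
  have "map_mat (jet_restrict r) ?A = 1\<^sub>m n - jet_const x \<cdot>\<^sub>m map_mat (jet_restrict r) (burau_jet n w)"
    using burau_jet_carrier[of n w] by (intro eq_matI) (auto simp: hom_distribs)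
  then have "jet_restrict r (det ?A) = det (1\<^sub>m n - jet_const x \<cdot>\<^sub>m (fun_mat n (follow (take r w)) *
      (burau_factor n (w ! r) (1 + jet_delta r) (1 - jet_delta r) * fun_mat n (follow (drop (Suc r) w)))))"
    by (simp flip: hom_det add: jet_restrict_burau_jet[OF w r])
  also have "\<dots> = 1 - jet_const x ^ ?m + ?\<tau> * (jet_const x ^ ?m - jet_const x ^ n)"
    by (rule det_one_minus_deformed_crossing[OF w knot r])
  finally have "jet_diff (det ?A) r =
      jet_diff (1 - jet_const x ^ ?m + ?\<tau> * (jet_const x ^ ?m - jet_const x ^ n)) r"
    by (metis jet_diff_restrict)
  also have "\<dots> = of_int (snd (w ! r)) * (x ^ ?m - x ^ n)"
    using braid_word_nth[OF w r] by (auto simp: jet_const_power letter_param_def)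
  finally show ?thesis .
qed

lemma has_real_derivative_det_one_minus_burau:
  assumes "braid_word n w" "is_knot_closure n w"
  shows "((\<lambda>h. det (1\<^sub>m n - x \<cdot>\<^sub>m burau n w (exp h))) has_real_derivative
    (\<Sum>r<length w. of_int (snd (w ! r)) * (x ^ m_turns w r - x ^ n))) (at 0)"
  using has_jet_det_one_minus_burau[OF assms(1), of x] jet_diff_det_one_minus_burau_jet[OF assms]
  by (simp add: has_jet_def)

definition fiedler_coeff :: "letter list \<Rightarrow> nat \<Rightarrow> int" where
  "fiedler_coeff w j = (\<Sum>r<length w. if m_turns w r = j then snd (w ! r) else 0)"

definition writhe :: "letter list \<Rightarrow> int" where
  "writhe w = (\<Sum>r<length w. snd (w ! r))"

lemma sum_fiedler_coeff_power:
  fixes x :: "'a::comm_ring_1"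
  assumes "finite J" "\<And>r. r < length w \<Longrightarrow> m_turns w r \<in> J"
  shows "(\<Sum>j\<in>J. of_int (fiedler_coeff w j) * x ^ j) =
    (\<Sum>r<length w. of_int (snd (w ! r)) * x ^ m_turns w r)"
proof -
  have "(\<Sum>j\<in>J. of_int (fiedler_coeff w j) * x ^ j) =
      (\<Sum>j\<in>J. \<Sum>r<length w. if m_turns w r = j then of_int (snd (w ! r)) * x ^ j else 0)"
    by (auto simp: fiedler_coeff_def sum_distrib_right intro!: sum.cong)
  also have "\<dots> = (\<Sum>r<length w. \<Sum>j\<in>J. if m_turns w r = j then of_int (snd (w ! r)) * x ^ j else 0)"
    by (rule sum.swap)
  also have "\<dots> = (\<Sum>r<length w. of_int (snd (w ! r)) * x ^ m_turns w r)"
    using assms by (simp add: sum.delta')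
  finally show ?thesis .
qed

lemma has_real_derivative_det_one_minus_burau_coeffs:
  assumes "braid_word n w" "is_knot_closure n w" "1 \<le> n"
  shows "((\<lambda>h. det (1\<^sub>m n - x \<cdot>\<^sub>m burau n w (exp h))) has_real_derivative
    (\<Sum>j=1..n. of_int (fiedler_coeff w j - (if j = n then writhe w else 0)) * x ^ j)) (at 0)"
proof -
  have m: "m_turns w r \<in> {1..n}" if "r < length w" for r
    using m_turns_bounds[OF assms(1,2) that] by auto
  have "(\<Sum>j=1..n. of_int (fiedler_coeff w j - (if j = n then writhe w else 0)) * x ^ j) =
      (\<Sum>j=1..n. of_int (fiedler_coeff w j) * x ^ j) -
      (\<Sum>j=1..n. if j = n then of_int (writhe w) * x ^ j else 0)"
    by (subst sum_subtractf[symmetric]) (auto intro!: sum.cong simp: algebra_simps)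
  also have "\<dots> = (\<Sum>r<length w. of_int (snd (w ! r)) * (x ^ m_turns w r - x ^ n))"
    using m assms(3)
    by (simp add: sum_fiedler_coeff_power writhe_def right_diff_distrib sum_subtractf sum_distrib_right)
  finally show ?thesis
    using has_real_derivative_det_one_minus_burau[OF assms(1,2)] by simp
qed

lemma sqrt_powi_eq:
  assumes "0 < x"
  shows "sqrt x powi (2 * int m - int n) = x ^ m * x powr (- real n / 2)"
proof -
  have "sqrt x powi (2 * int m - int n) = sqrt x powr real_of_int (2 * int m - int n)"
    using powr_real_of_int'[of "sqrt x" "2 * int m - int n"] assms by simp
  also have "\<dots> = (x powr (1 / 2)) powr real_of_int (2 * int m - int n)"
    using assms by (simp add: powr_half_sqrt)
  also have "\<dots> = x powr (real m + (- real n / 2))"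
    by (simp add: powr_powr algebra_simps)
  also have "\<dots> = x ^ m * x powr (- real n / 2)"
    using assms by (simp only: powr_add powr_realpow)
  finally show ?thesis .
qed

lemma fiedler_sqrt_eq:
  assumes "braid_word n w" "is_knot_closure n w" "0 < x"
  shows "fiedler n w (sqrt x) = (\<Sum>j=1..n-1. of_int (fiedler_coeff w j) * x ^ j) * x powr (- real n / 2)"
proof -
  have "fiedler n w (sqrt x) =
      (\<Sum>r<length w. of_int (snd (w ! r)) * x ^ m_turns w r) * x powr (- real n / 2)"
    using assms(3) by (simp add: fiedler_def sqrt_powi_eq sum_distrib_right mult.assoc)
  also have "(\<Sum>r<length w. of_int (snd (w ! r)) * x ^ m_turns w r) =
      (\<Sum>j=1..n-1. of_int (fiedler_coeff w j) * x ^ j)"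
  proof (rule sum_fiedler_coeff_power[symmetric])
    show "m_turns w r \<in> {1..n - 1}" if "r < length w" for r
      using m_turns_bounds[OF assms(1,2) that] by auto
  qed simp
  finally show ?thesis .
qed

lemma polyfun_eq_coeffs_atLeast1:
  fixes c d :: "nat \<Rightarrow> real"
  assumes "\<And>x. (\<Sum>j=1..n. c j * x ^ j) = (\<Sum>j=1..n. d j * x ^ j)" and "j \<in> {1..n}"
  shows "c j = d j"
proof -
  have "(\<Sum>i\<le>n. (f(0 := 0)) i * x ^ i) = (\<Sum>j=1..n. f j * x ^ j)" for f :: "nat \<Rightarrow> real" and x
    by (simp add: atMost_atLeast0 sum.atLeast_Suc_atMost One_nat_def)
  with assms(1) have "\<forall>i\<le>n. (c(0 := 0)) i = (d(0 := 0)) i"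
    by (subst polyfun_eq_coeffs[symmetric]) simp
  with assms(2) show ?thesis
    by auto
qed

theorem theorem1:
  fixes n :: nat and w :: "letter list"
  assumes "n \<ge> 1" and "braid_word n w" and "is_knot_closure n w"
  defines "D \<equiv> \<lambda>(x::real) (h::real). det (1\<^sub>m n - x \<cdot>\<^sub>m burau n w (exp h))"
  shows "(\<exists>f :: nat \<Rightarrow> int. \<forall>x. (D x has_real_derivative (\<Sum>j=1..n. of_int (f j) * x ^ j)) (at 0)) \<and>
         (\<forall>f :: nat \<Rightarrow> int.
            (\<forall>x. (D x has_real_derivative (\<Sum>j=1..n. of_int (f j) * x ^ j)) (at 0)) \<longrightarrow>
            (\<forall>x>0. fiedler n w (sqrt x) =
                   (\<Sum>j=1..n-1. of_int (f j) * x ^ j) * x powr (- real n / 2)))"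
proof -
  define f\<^sub>0 where "f\<^sub>0 j = fiedler_coeff w j - (if j = n then writhe w else 0)" for j
  have f\<^sub>0: "(D x has_real_derivative (\<Sum>j=1..n. of_int (f\<^sub>0 j) * x ^ j)) (at 0)" for x
    unfolding D_def f\<^sub>0_def using assms(2,3,1) by (rule has_real_derivative_det_one_minus_burau_coeffs)
  moreover have "fiedler n w (sqrt x) = (\<Sum>j=1..n-1. of_int (f j) * x ^ j) * x powr (- real n / 2)"
    if f: "\<forall>x. (D x has_real_derivative (\<Sum>j=1..n. of_int (f j) * x ^ j)) (at 0)" and "0 < x" for f x
  proof -
    have "f j = fiedler_coeff w j" if "j \<in> {1..n-1}" for j
    proof -
      have "j \<in> {1..n}" "j \<noteq> n"
        using that by auto
      with polyfun_eq_coeffs_atLeast1[OF DERIV_unique[OF f[rule_format] f\<^sub>0], of j] show ?thesis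
        by (simp add: f\<^sub>0_def)
    qed
    then have "(\<Sum>j=1..n-1. of_int (f j) * x ^ j) = (\<Sum>j=1..n-1. of_int (fiedler_coeff w j) * x ^ j)"
      by simp
    with fiedler_sqrt_eq[OF assms(2,3) \<open>0 < x\<close>] show ?thesis
      by simp
  qed
  ultimately show ?thesis
    by blast
qed

end
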